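(* Assume $|M|\ge 2$. Let $(T_{opt},B_{opt})$ be an optimal solution of an instance of MEMTCS and let $T_I$ be a minimum isotropic scattering tree for $M$. Then $(\Xi(T_I)+1)\,e_s+(|N(T_{opt})|-1)\,e_r\ \le\ 2\,\Pi(T_{opt},B_{opt})$.
   Context: Let $G=(V,E)$ be a finite, simple, undirected, connected graph with $|V|\ge 2$. Fix a positive integer $K$ and, for every $u\in V$, a nonempty set $\Gamma(u)\subseteq\{1,\dots,K\}$. For a tree $T$, $N(T)$ is its vertex set, $nb_T(u)$ the neighbours of $u$ in $T$, and $d^+(T)$ the set of vertices of degree greater than one in $T$; if $T$ is rooted, $nl(T)$ is its set of non-leaf vertices and $child(u,T)$ the set of children of $u$. A hitting set of a collection $\mathcal C$ of subsets of a finite set $\mathcal F$ is a subset of $\mathcal F$ meeting every member of $\mathcal C$. For a tree $T$ in $G$ and $u\in d^+(T)$, let $\Upsilon(u,T)$ be a minimum-cardinality hitting set of $\{\Gamma(v): v\in nb_T(u)\}$, and let $\Xi(T)=\sum_{u\in d^+(T)}|\Upsilon(u,T)|$. A minimum isotropic scattering tree $T_I$ for $M$ is a tree in $G$ with $M\subseteq N(T_I)$ minimizing $\Xi$ among all such trees. An instance of MEMTCS consists of $G,K,\Gamma$, a terminal set $M\subseteq V$, a source $s\in M$, and reals $e_s\ge e_r\ge 0$. A multicast tree is a subtree $T$ of $G$ with $M\subseteq N(T)$, rooted at $s$. A feasible schedule for $T$ is a function $B: nl(T)\to 2^{\{1,\dots,K\}}$ such that each $B(u)$ is a hitting set of $\{\Gamma(v):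 v\in child(u,T)\}$. Its cost is $\Pi(T,B)=\sum_{u\in nl(T)}|B(u)|\,e_s+(|N(T)|-1)\,e_r$. An optimal solution $(T_{opt},B_{opt})$ minimizes $\Pi$ over all pairs of a multicast tree and a feasible schedule for it. *)

theory Defs
  imports Complex_Main
begin

text \<open>Graphs: a vertex set V and a set E of undirected edges, each edge a 2-element set.
  A subtree T of G is given by its vertex set N and its edge set F.\<close>

definition reach :: "'a set set \<Rightarrow> 'a \<Rightarrow> 'a \<Rightarrow> bool" where
  "reach F u v \<longleftrightarrow> (u, v) \<in> {(x, y). {x, y} \<in> F}\<^sup>*"

definition simple_graph :: "'a set \<Rightarrow> 'a set set \<Rightarrow> bool" where
  "simple_graph V E \<longleftrightarrow> finite V \<and> (\<forall>e\<in>E. e \<subseteq> V \<and> card e = 2)"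

definition connected_graph :: "'a set \<Rightarrow> 'a set set \<Rightarrow> bool" where
  "connected_graph N F \<longleftrightarrow> N \<noteq> {} \<and> (\<forall>e\<in>F. e \<subseteq> N) \<and> (\<forall>u\<in>N. \<forall>v\<in>N. reach F u v)"

text \<open>A tree is a connected graph without cycles; acyclicity is expressed as:
  every edge is a bridge (its endpoints are disconnected after removing it).\<close>
definition is_tree :: "'a set \<Rightarrow> 'a set set \<Rightarrow> bool" where
  "is_tree N F \<longleftrightarrow> connected_graph N F \<and>
     (\<forall>u v. {u, v} \<in> F \<longrightarrow> \<not> reach (F - {{u, v}}) u v)"

definition tree_in :: "'a set \<Rightarrow> 'a set set \<Rightarrow> 'a set \<Rightarrow> 'a set set \<Rightarrow> bool" where
  "tree_in V E N F \<longleftrightarrow> N \<subseteq> V \<and> F \<subseteq> E \<and> is_tree N F"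

definition nb :: "'a set set \<Rightarrow> 'a \<Rightarrow> 'a set" where
  "nb F u = {v. {u, v} \<in> F}"

definition dplus :: "'a set \<Rightarrow> 'a set set \<Rightarrow> 'a set" where
  "dplus N F = {u \<in> N. card (nb F u) > 1}"

text \<open>Rooted at s: v is a child of u iff uv is a tree edge and, after deleting it,
  u is still on the side of the root s.\<close>
definition child :: "'a set set \<Rightarrow> 'a \<Rightarrow> 'a \<Rightarrow> 'a set" where
  "child F s u = {v. {u, v} \<in> F \<and> reach (F - {{u, v}}) s u}"

definition nl :: "'a set \<Rightarrow> 'a set set \<Rightarrow> 'a \<Rightarrow> 'a set" where
  "nl N F s = {u \<in> N. child F s u \<noteq> {}}"

definition hitting_set :: "nat \<Rightarrow> nat set set \<Rightarrow> nat set \<Rightarrow> bool" where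
  "hitting_set K C H \<longleftrightarrow> H \<subseteq> {1..K} \<and> (\<forall>X\<in>C. H \<inter> X \<noteq> {})"

definition min_hit_card :: "nat \<Rightarrow> nat set set \<Rightarrow> nat" where
  "min_hit_card K C = Min {card H | H. hitting_set K C H}"

definition Xi :: "nat \<Rightarrow> ('a \<Rightarrow> nat set) \<Rightarrow> 'a set \<Rightarrow> 'a set set \<Rightarrow> nat" where
  "Xi K \<Gamma> N F = (\<Sum>u\<in>dplus N F. min_hit_card K (\<Gamma> ` nb F u))"

definition min_iso_scattering_tree ::
  "'a set \<Rightarrow> 'a set set \<Rightarrow> nat \<Rightarrow> ('a \<Rightarrow> nat set) \<Rightarrow> 'a set \<Rightarrow> 'a set \<Rightarrow> 'a set set \<Rightarrow> bool" where
  "min_iso_scattering_tree V E K \<Gamma> M N F \<longleftrightarrow>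
     tree_in V E N F \<and> M \<subseteq> N \<and>
     (\<forall>N' F'. tree_in V E N' F' \<and> M \<subseteq> N' \<longrightarrow> Xi K \<Gamma> N F \<le> Xi K \<Gamma> N' F')"

definition multicast_tree :: "'a set \<Rightarrow> 'a set set \<Rightarrow> 'a set \<Rightarrow> 'a set \<Rightarrow> 'a set set \<Rightarrow> bool" where
  "multicast_tree V E M N F \<longleftrightarrow> tree_in V E N F \<and> M \<subseteq> N"

definition feasible_schedule ::
  "nat \<Rightarrow> ('a \<Rightarrow> nat set) \<Rightarrow> 'a \<Rightarrow> 'a set \<Rightarrow> 'a set set \<Rightarrow> ('a \<Rightarrow> nat set) \<Rightarrow> bool" where
  "feasible_schedule K \<Gamma> s N F B \<longleftrightarrow>
     (\<forall>u\<in>nl N F s. hitting_set K (\<Gamma> ` child F s u) (B u))"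

definition cost :: "real \<Rightarrow> real \<Rightarrow> 'a \<Rightarrow> 'a set \<Rightarrow> 'a set set \<Rightarrow> ('a \<Rightarrow> nat set) \<Rightarrow> real" where
  "cost e_s e_r s N F B = (\<Sum>u\<in>nl N F s. real (card (B u)) * e_s) + (real (card N) - 1) * e_r"

definition optimal_solution ::
  "'a set \<Rightarrow> 'a set set \<Rightarrow> nat \<Rightarrow> ('a \<Rightarrow> nat set) \<Rightarrow> 'a set \<Rightarrow> 'a \<Rightarrow> real \<Rightarrow> real
     \<Rightarrow> 'a set \<Rightarrow> 'a set set \<Rightarrow> ('a \<Rightarrow> nat set) \<Rightarrow> bool" where
  "optimal_solution V E K \<Gamma> M s e_s e_r N F B \<longleftrightarrow>
     multicast_tree V E M N F \<and> feasible_schedule K \<Gamma> s N F B \<and>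
     (\<forall>N' F' B'. multicast_tree V E M N' F' \<and> feasible_schedule K \<Gamma> s N' F' B' \<longrightarrow>
        cost e_s e_r s N F B \<le> cost e_s e_r s N' F' B')"

end

theory Submission
  imports Defs
begin

text \<open>
  Let T = (Nopt, Fopt) be the optimal multicast tree rooted at s with schedule
  Bopt.  Since T is itself a tree spanning M, minimality of T_I gives Xi(T_I) \<le> Xi(T).
  In a rooted tree every vertex u has at most one neighbour that is not a child (its
  parent), and the root has none.  Hence a vertex u of degree > 1 has a child, so it is a
  non-leaf, and a hitting set of the Gamma-sets of all neighbours of u is obtained from
  Bopt(u) by adding at most one channel (none at the root).  As every non-leaf has a
  nonempty Bopt, each branching vertex contributes |Upsilon(u,T)| + [u = s] \<le> 2|Bopt(u)|,
  and because |M| \<ge> 2 the root is a non-leaf.  A counting lemma sums this to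
  Xi(T) + 1 \<le> 2 \<Sum> |Bopt(u)| over the non-leaves, and multiplying by e_s \<ge> 0 while
  bounding the e_r term trivially yields the claim.
\<close>

lemma reach_refl [simp]: "reach F a a"
  by (simp add: reach_def)

lemma reach_step: "reach F a b \<Longrightarrow> {b, c} \<in> F \<Longrightarrow> reach F a c"
  unfolding reach_def by (rule rtrancl_into_rtrancl) auto

lemma reach_mono: "reach F a b \<Longrightarrow> F \<subseteq> G \<Longrightarrow> reach G a b"
  unfolding reach_def by (erule rtrancl_mono[THEN subsetD, rotated]) auto

lemma reach_delete_edge:
  assumes "reach F a b"
  shows "reach (F - {{x, y}}) a b
     \<or> (reach (F - {{x, y}}) a x \<and> reach (F - {{x, y}}) y b)
     \<or> (reach (F - {{x, y}}) a y \<and> reach (F - {{x, y}}) x b)"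
  using assms unfolding reach_def[of F]
proof (induction rule: rtrancl_induct)
  case base
  then show ?case by simp
next
  case (step c b)
  then have cb: "{c, b} \<in> F" by simp
  show ?case
  proof (cases "{c, b} = {x, y}")
    case True
    then have "(c = x \<and> b = y) \<or> (c = y \<and> b = x)" by (auto simp: doubleton_eq_iff)
    then show ?thesis using step.IH by auto
  next
    case False
    then have "{c, b} \<in> F - {{x, y}}" using cb by simp
    then show ?thesis using step.IH reach_step by metis
  qed
qed

lemma parent_unique:
  assumes bridges: "\<forall>u v. {u, v} \<in> F \<longrightarrow> \<not> reach (F - {{u, v}}) u v"
    and r: "reach F s u" and e1: "{u, v1} \<in> F" and e2: "{u, v2} \<in> F"
    and n1: "\<not> reach (F - {{u, v1}}) s u" and n2: "\<not> reach (F - {{u, v2}}) s u"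
  shows "v1 = v2"
proof (rule ccontr)
  assume ne: "v1 \<noteq> v2"
  let ?G = "F - {{u, v1}} - {{u, v2}}"
  have sub1: "?G \<subseteq> F - {{u, v2}}" and sub2: "?G \<subseteq> F - {{u, v1}}" by auto
  have s_v1: "reach (F - {{u, v1}}) s v1"
    using reach_delete_edge[OF r, of u v1] n1 by auto
  have e1': "{v1, u} \<in> F - {{u, v2}}"
    using e1 ne by (auto simp: doubleton_eq_iff insert_commute)
  have "\<not> reach ?G s v1"
    using reach_mono[OF _ sub1] reach_step[OF _ e1'] n2 by blast
  moreover have "\<not> reach ?G s u"
    using reach_mono[OF _ sub1] n2 by blast
  moreover have "\<not> reach ?G u v1"
    using reach_mono[OF _ sub2] bridges e1 by blast
  ultimately show False
    using reach_delete_edge[OF s_v1, of u v2] by blast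
qed

lemma nb_subset_children_and_parent:
  assumes bridges: "\<forall>u v. {u, v} \<in> F \<longrightarrow> \<not> reach (F - {{u, v}}) u v"
    and r: "reach F s u"
  obtains p where "nb F u \<subseteq> insert p (child F s u)"
proof (cases "nb F u \<subseteq> child F s u")
  case True
  then show ?thesis using that by blast
next
  case False
  then obtain p where p: "p \<in> nb F u" "p \<notin> child F s u" by blast
  have "v = p" if "v \<in> nb F u" "v \<notin> child F s u" for v
    using parent_unique[OF bridges r] that p unfolding nb_def child_def by blast
  then show ?thesis using that[of p] by blast
qed

lemma nb_root: "nb F s = child F s s"
  unfolding nb_def child_def by simp

lemma branching_has_child:
  assumes "nb F u \<subseteq> insert p (child F s u)" and "card (nb F u) > 1"
  shows "child F s u \<noteq> {}"
proof
  assume "child F s u = {}"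
  then have "card (nb F u) \<le> card {p}"
    using assms(1) by (intro card_mono) auto
  then show False using assms(2) by simp
qed

lemma hitting_set_finite: "hitting_set K C H \<Longrightarrow> finite H"
  unfolding hitting_set_def using finite_subset by blast

lemma hitting_set_nonempty: "hitting_set K C H \<Longrightarrow> C \<noteq> {} \<Longrightarrow> H \<noteq> {}"
  unfolding hitting_set_def by auto

lemma hitting_set_anti_mono: "hitting_set K C H \<Longrightarrow> C' \<subseteq> C \<Longrightarrow> hitting_set K C' H"
  unfolding hitting_set_def by auto

lemma hitting_set_insert:
  "hitting_set K C H \<Longrightarrow> k \<in> X \<Longrightarrow> k \<in> {1..K} \<Longrightarrow> hitting_set K (insert X C) (insert k H)"
  unfolding hitting_set_def by auto

lemma min_hit_card_le:
  assumes "hitting_set K C H"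
  shows "min_hit_card K C \<le> card H"
proof -
  have "{card H | H. hitting_set K C H} \<subseteq> card ` Pow {1..K}"
    unfolding hitting_set_def by auto
  then have "finite {card H | H. hitting_set K C H}"
    using finite_subset by blast
  then show ?thesis
    unfolding min_hit_card_def using Min_le assms by blast
qed

lemma min_hit_nb_le:
  assumes nb_sub: "nb F u \<subseteq> insert p (child F s u)"
    and root: "u = s \<Longrightarrow> nb F u = child F s u"
    and B: "hitting_set K (\<Gamma> ` child F s u) B"
    and \<Gamma>: "\<forall>v\<in>nb F u. \<Gamma> v \<noteq> {} \<and> \<Gamma> v \<subseteq> {1..K}"
  shows "min_hit_card K (\<Gamma> ` nb F u) \<le> card B + (if u = s then 0 else 1)"
proof (cases "nb F u \<subseteq> child F s u")
  case True
  then have "hitting_set K (\<Gamma> ` nb F u) B"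
    using B hitting_set_anti_mono by blast
  then show ?thesis using min_hit_card_le by fastforce
next
  case False
  then have "u \<noteq> s" and p: "p \<in> nb F u" using root nb_sub by auto
  then obtain k where k: "k \<in> \<Gamma> p" "k \<in> {1..K}" using \<Gamma> by blast
  have "hitting_set K (\<Gamma> ` insert p (child F s u)) (insert k B)"
    using hitting_set_insert[OF B k(1)] k(2) by simp
  then have "hitting_set K (\<Gamma> ` nb F u) (insert k B)"
    using nb_sub hitting_set_anti_mono by (metis image_mono)
  then have "min_hit_card K (\<Gamma> ` nb F u) \<le> card (insert k B)"
    by (rule min_hit_card_le)
  also have "\<dots> \<le> card B + 1"
    using hitting_set_finite[OF B] by (simp add: card_insert_if)
  finally show ?thesis using \<open>u \<noteq> s\<close> by simp
qed

lemma sum_bound_with_root: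
  fixes h w :: "'a \<Rightarrow> nat"
  assumes fin: "finite L" and DL: "D \<subseteq> L" and sL: "s \<in> L"
    and w_pos: "\<forall>u\<in>L. 1 \<le> w u"
    and h_le: "\<forall>u\<in>D. h u \<le> w u + (if u = s then 0 else 1)"
  shows "(\<Sum>u\<in>D. h u) + 1 \<le> 2 * (\<Sum>u\<in>L. w u)"
proof -
  have finD: "finite D" using fin DL finite_subset by blast
  have pointwise: "h u + (if u = s then 1 else 0) \<le> 2 * w u" if "u \<in> D" for u
    using h_le w_pos DL that by (cases "u = s") force+
  have "(\<Sum>u\<in>D. h u) + (if s \<in> D then 1 else 0)
        = (\<Sum>u\<in>D. h u + (if u = s then 1 else 0))"
    by (simp add: sum.distrib sum.delta[OF finD])
  also have "\<dots> \<le> 2 * (\<Sum>u\<in>D. w u)"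
    using pointwise by (simp add: sum_distrib_left sum_mono)
  finally have D_bound: "(\<Sum>u\<in>D. h u) + (if s \<in> D then 1 else 0) \<le> 2 * (\<Sum>u\<in>D. w u)" .
  show ?thesis
  proof (cases "s \<in> D")
    case True
    have "(\<Sum>u\<in>D. w u) \<le> (\<Sum>u\<in>L. w u)" using sum_mono2[OF fin DL] by blast
    then show ?thesis using D_bound True by simp
  next
    case False
    have "(\<Sum>u\<in>D. w u) + 1 \<le> (\<Sum>u\<in>D. w u) + w s"
      using w_pos sL by simp
    also have "\<dots> = (\<Sum>u\<in>insert s D. w u)"
      using False finD by simp
    also have "\<dots> \<le> (\<Sum>u\<in>L. w u)"
      by (rule sum_mono2[OF fin]) (use DL sL in auto)
    finally have "(\<Sum>u\<in>D. w u) + 1 \<le> (\<Sum>u\<in>L. w u)" .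
    then show ?thesis using D_bound by simp
  qed
qed

lemma nb_in_vertices:
  "simple_graph V E \<Longrightarrow> F \<subseteq> E \<Longrightarrow> v \<in> nb F u \<Longrightarrow> v \<in> V"
  unfolding simple_graph_def nb_def by blast

lemma root_non_leaf:
  assumes "connected_graph N F" and "s \<in> N" and "m \<in> N" and "m \<noteq> s"
  shows "s \<in> nl N F s"
proof -
  have "(s, m) \<in> {(x, y). {x, y} \<in> F}\<^sup>*"
    using assms unfolding connected_graph_def reach_def by blast
  then obtain w where "{s, w} \<in> F"
    by (rule converse_rtranclE) (use assms(4) in auto)
  then show ?thesis using assms(2) unfolding nl_def child_def by auto
qed

lemma Xi_bound_by_schedule:
  assumes sg: "simple_graph V E" and T: "tree_in V E N F"
    and \<Gamma>: "\<forall>u\<in>V. \<Gamma> u \<noteq> {} \<and> \<Gamma> u \<subseteq> {1..K}"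
    and B: "feasible_schedule K \<Gamma> s N F B"
    and sN: "s \<in> N" and sL: "s \<in> nl N F s"
  shows "Xi K \<Gamma> N F + 1 \<le> 2 * (\<Sum>u\<in>nl N F s. card (B u))"
proof -
  have FE: "F \<subseteq> E" and NV: "N \<subseteq> V"
    and conn: "connected_graph N F"
    and bridges: "\<forall>u v. {u, v} \<in> F \<longrightarrow> \<not> reach (F - {{u, v}}) u v"
    using T unfolding tree_in_def is_tree_def by auto
  have B_hits: "hitting_set K (\<Gamma> ` child F s u) (B u)" if "u \<in> nl N F s" for u
    using B that unfolding feasible_schedule_def by blast
  have B_pos: "1 \<le> card (B u)" if "u \<in> nl N F s" for u
  proof -
    have "B u \<noteq> {}"
      using hitting_set_nonempty[OF B_hits[OF that]] that unfolding nl_def by auto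
    then show ?thesis using hitting_set_finite[OF B_hits[OF that]]
      by (simp add: Suc_leI card_gt_0_iff)
  qed
  have branching: "u \<in> nl N F s \<and>
      min_hit_card K (\<Gamma> ` nb F u) \<le> card (B u) + (if u = s then 0 else 1)"
    if uD: "u \<in> dplus N F" for u
  proof -
    have uN: "u \<in> N" and deg: "card (nb F u) > 1" using uD unfolding dplus_def by auto
    have "reach F s u" using conn sN uN unfolding connected_graph_def by blast
    then obtain p where p: "nb F u \<subseteq> insert p (child F s u)"
      using nb_subset_children_and_parent[OF bridges] by blast
    have uL: "u \<in> nl N F s"
      using branching_has_child[OF p deg] uN unfolding nl_def by blast
    have "\<forall>v\<in>nb F u. \<Gamma> v \<noteq> {} \<and> \<Gamma> v \<subseteq> {1..K}"
      using \<Gamma> nb_in_vertices[OF sg FE] by blast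
    moreover have "u = s \<Longrightarrow> nb F u = child F s u" using nb_root by simp
    ultimately show ?thesis
      using min_hit_nb_le[OF p _ B_hits[OF uL]] uL by blast
  qed
  have "finite N" using NV sg finite_subset unfolding simple_graph_def by blast
  then have finL: "finite (nl N F s)" unfolding nl_def by simp
  have DL: "dplus N F \<subseteq> nl N F s" using branching by blast
  show ?thesis
    unfolding Xi_def
    by (rule sum_bound_with_root[OF finL DL sL]) (use branching B_pos in blast)+
qed

theorem mainTheorem13:
  fixes V :: "'a set" and E :: "'a set set" and K :: nat and \<Gamma> :: "'a \<Rightarrow> nat set"
    and M :: "'a set" and s :: 'a and e_s e_r :: real
    and Nopt :: "'a set" and Fopt :: "'a set set" and Bopt :: "'a \<Rightarrow> nat set"
    and NI :: "'a set" and FI :: "'a set set"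
  assumes "simple_graph V E" and "connected_graph V E" and "card V \<ge> 2"
    and "K > 0"
    and "\<forall>u\<in>V. \<Gamma> u \<noteq> {} \<and> \<Gamma> u \<subseteq> {1..K}"
    and "M \<subseteq> V" and "s \<in> M" and "e_s \<ge> e_r" and "e_r \<ge> 0"
    and "card M \<ge> 2"
    and "optimal_solution V E K \<Gamma> M s e_s e_r Nopt Fopt Bopt"
    and "min_iso_scattering_tree V E K \<Gamma> M NI FI"
  shows "(real (Xi K \<Gamma> NI FI) + 1) * e_s + (real (card Nopt) - 1) * e_r
           \<le> 2 * cost e_s e_r s Nopt Fopt Bopt"
proof -
  define S where "S = (\<Sum>u\<in>nl Nopt Fopt s. card (Bopt u))"
  have T: "tree_in V E Nopt Fopt" and MN: "M \<subseteq> Nopt"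
    and B: "feasible_schedule K \<Gamma> s Nopt Fopt Bopt"
    using assms(11) unfolding optimal_solution_def multicast_tree_def by auto
  have sN: "s \<in> Nopt" using MN assms(7) by blast
  have "\<not> M \<subseteq> {s}"
  proof
    assume "M \<subseteq> {s}"
    then have "card M \<le> card {s}" by (intro card_mono) auto
    then show False using assms(10) by simp
  qed
  then obtain m where "m \<in> M" "m \<noteq> s" by blast
  then have sL: "s \<in> nl Nopt Fopt s"
    using root_non_leaf[of Nopt Fopt s m] T MN sN unfolding tree_in_def is_tree_def by blast
  have "Xi K \<Gamma> NI FI \<le> Xi K \<Gamma> Nopt Fopt"
    using assms(12) T MN unfolding min_iso_scattering_tree_def by blast
  then have XS: "real (Xi K \<Gamma> NI FI) + 1 \<le> 2 * real S"
    using Xi_bound_by_schedule[OF assms(1) T assms(5) B sN sL] unfolding S_def by linarith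
  have "card Nopt \<ge> 1"
    using T sN assms(1) finite_subset unfolding tree_in_def simple_graph_def
    by (metis One_nat_def Suc_leI card_gt_0_iff empty_iff)
  then have er_term: "0 \<le> (real (card Nopt) - 1) * e_r" using assms(9) by simp
  have "(real (Xi K \<Gamma> NI FI) + 1) * e_s \<le> 2 * real S * e_s"
    using XS assms(8,9) by (intro mult_right_mono) auto
  moreover have "cost e_s e_r s Nopt Fopt Bopt = real S * e_s + (real (card Nopt) - 1) * e_r"
    unfolding cost_def S_def by (simp add: sum_distrib_right)
  ultimately show ?thesis using er_term by (simp add: algebra_simps)
qed

end
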